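(* Let $\{\Omega_i\}_{i\ge0}$ be a contracting family of open subsets of $\mathbb{R}^2$, let $0<\eta<1$, and let $\{E_i\}_{i\ge0}$ be measurable sets with $E_i\subset\Omega_i$ and $|E_i|\ge\eta|\Omega_i|$ for all $i\ge0$. Then for every $A\subset\{0,1,2,\dots\}$, \[\sum_{i\in A}|E_i|\lesssim_\eta\Big|\bigcup_{i\in A}E_i\Big|,\] with implicit constant depending only on $\eta$.
   Context: A sequence of open sets $\{\Omega_i\}_{i\ge0}$ of finite measure is called contracting if $\Omega_{i+1}\subset\Omega_i$ and $|\Omega_{i+1}|\le\frac12|\Omega_i|$ for all $i\ge0$. *)

theory Defs
  imports "HOL-Analysis.Analysis"
begin

definition contracting :: "(nat \<Rightarrow> 'a::euclidean_space set) \<Rightarrow> bool" where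
  "contracting \<Omega> \<longleftrightarrow>
     (\<forall>i. open (\<Omega> i) \<and> emeasure lebesgue (\<Omega> i) < \<infinity>) \<and>
     (\<forall>i. \<Omega> (Suc i) \<subseteq> \<Omega> i \<and>
          emeasure lebesgue (\<Omega> (Suc i)) \<le> ennreal (1/2) * emeasure lebesgue (\<Omega> i))"

end

theory Submission
  imports Defs
begin

text \<open>Since the sets are nested and their measures decay geometrically, the sets \<open>E i\<close> with
\<open>i \<in> A\<close> all lie in \<open>\<Omega> m\<close> for \<open>m = min A\<close>, and the sum of their measures is at most
\<open>\<Sum>k |\<Omega> (m + k)| \<le> 2 |\<Omega> m| \<le> (2 / \<eta>) |E m| \<le> (2 / \<eta>) |\<Union>i\<in>A. E i|\<close>.\<close>

lemma contracting_emeasure_shift_le: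
  assumes "contracting \<Omega>"
  shows "emeasure lebesgue (\<Omega> (m + k)) \<le> ennreal ((1/2) ^ k) * emeasure lebesgue (\<Omega> m)"
proof (induction k)
  case 0
  then show ?case by simp
next
  case (Suc k)
  have "emeasure lebesgue (\<Omega> (m + Suc k)) \<le> ennreal (1/2) * emeasure lebesgue (\<Omega> (m + k))"
    using assms unfolding contracting_def add_Suc_right by blast
  also have "\<dots> \<le> ennreal (1/2) * (ennreal ((1/2) ^ k) * emeasure lebesgue (\<Omega> m))"
    using Suc.IH by (rule mult_left_mono) simp
  also have "\<dots> = ennreal ((1/2) ^ Suc k) * emeasure lebesgue (\<Omega> m)"
    unfolding mult.assoc[symmetric] by (subst ennreal_mult[symmetric]) auto
  finally show ?case .
qed

lemma contracting_suminf_emeasure_le: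
  assumes "contracting \<Omega>"
  shows "(\<Sum>k. emeasure lebesgue (\<Omega> (m + k))) \<le> 2 * emeasure lebesgue (\<Omega> m)"
proof -
  have "(\<Sum>k. emeasure lebesgue (\<Omega> (m + k)))
          \<le> (\<Sum>k. ennreal ((1/2) ^ k) * emeasure lebesgue (\<Omega> m))"
    using assms by (intro suminf_le contracting_emeasure_shift_le) auto
  also have "\<dots> = (\<Sum>k. ennreal ((1/2) ^ k)) * emeasure lebesgue (\<Omega> m)"
    by (simp add: ennreal_suminf_multc)
  also have "(\<Sum>k. ennreal ((1/2::real) ^ k)) = ennreal 2"
    using geometric_sums[of "1/2::real"] by (intro suminf_ennreal_eq) auto
  finally show ?thesis by simp
qed

lemma contracting_suminf_subsets_le:
  assumes "contracting \<Omega>" and "\<And>i. E i \<subseteq> \<Omega> i" and "\<And>i. i \<in> A \<Longrightarrow> m \<le> i"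
  shows "(\<Sum>i. if i \<in> A then emeasure lebesgue (E i) else 0) \<le> 2 * emeasure lebesgue (\<Omega> m)"
proof -
  let ?f = "\<lambda>i. if i \<in> A then emeasure lebesgue (E i) else 0"
  have "(\<Sum>i. ?f i) = (\<Sum>k. ?f (k + m)) + (\<Sum>i<m. ?f i)"
    by (rule suminf_offset) simp
  also have "(\<Sum>i<m. ?f i) = 0"
    using assms(3) by (intro sum.neutral) (auto dest: leD)
  also have "(\<Sum>k. ?f (k + m)) \<le> (\<Sum>k. emeasure lebesgue (\<Omega> (m + k)))"
  proof (rule suminf_le)
    fix k
    have "\<Omega> (m + k) \<in> sets lebesgue"
      using assms(1) unfolding contracting_def by auto
    then have "emeasure lebesgue (E (m + k)) \<le> emeasure lebesgue (\<Omega> (m + k))"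
      by (intro emeasure_mono assms(2))
    then show "?f (k + m) \<le> emeasure lebesgue (\<Omega> (m + k))"
      by (simp add: add.commute)
  qed simp_all
  also have "\<dots> \<le> 2 * emeasure lebesgue (\<Omega> m)"
    using assms(1) by (rule contracting_suminf_emeasure_le)
  finally show ?thesis by simp
qed

theorem lemma2p3:
  fixes \<eta> :: real
  assumes "0 < \<eta>" and "\<eta> < 1"
  shows "\<exists>C::real. C > 0 \<and>
    (\<forall>(\<Omega> :: nat \<Rightarrow> (real \<times> real) set) (E :: nat \<Rightarrow> (real \<times> real) set) (A :: nat set).
       contracting \<Omega> \<longrightarrow>
       (\<forall>i. E i \<in> sets lebesgue \<and> E i \<subseteq> \<Omega> i \<and>
            emeasure lebesgue (E i) \<ge> ennreal \<eta> * emeasure lebesgue (\<Omega> i)) \<longrightarrow>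
       (\<Sum>i. if i \<in> A then emeasure lebesgue (E i) else 0)
         \<le> ennreal C * emeasure lebesgue (\<Union>i\<in>A. E i))"
proof (intro exI[of _ "2/\<eta>"] conjI allI impI)
  show "0 < 2 / \<eta>" using assms by simp
next
  fix \<Omega> E :: "nat \<Rightarrow> (real \<times> real) set" and A :: "nat set"
  assume \<Omega>: "contracting \<Omega>"
    and E: "\<forall>i. E i \<in> sets lebesgue \<and> E i \<subseteq> \<Omega> i \<and>
              emeasure lebesgue (E i) \<ge> ennreal \<eta> * emeasure lebesgue (\<Omega> i)"
  show "(\<Sum>i. if i \<in> A then emeasure lebesgue (E i) else 0)
          \<le> ennreal (2/\<eta>) * emeasure lebesgue (\<Union>i\<in>A. E i)"
  proof (cases "A = {}")
    case False
    define m where "m = (LEAST i. i \<in> A)"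
    have "m \<in> A" using False unfolding m_def by (meson LeastI ex_in_conv)
    have "(\<Sum>i. if i \<in> A then emeasure lebesgue (E i) else 0) \<le> 2 * emeasure lebesgue (\<Omega> m)"
      using \<Omega> E by (intro contracting_suminf_subsets_le) (auto simp: m_def Least_le)
    also have "\<dots> = ennreal (2/\<eta>) * (ennreal \<eta> * emeasure lebesgue (\<Omega> m))"
      using assms(1) by (simp flip: mult.assoc ennreal_mult)
    also have "\<dots> \<le> ennreal (2/\<eta>) * emeasure lebesgue (E m)"
      using E by (meson mult_left_mono zero_le)
    also have "\<dots> \<le> ennreal (2/\<eta>) * emeasure lebesgue (\<Union>i\<in>A. E i)"
      using E \<open>m \<in> A\<close> by (intro mult_left_mono emeasure_mono) auto
    finally show ?thesis .
  qed simp
qed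

end
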